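(* Let $G$ be a finite simple undirected graph with adjacency matrix $A=\sum_{r=0}^d\theta_rE_r$ (spectral decomposition), and let $a,b$ be vertices. Let $w_1,\dots,w_k$ and integers $f^r_\ell$ be as in the context, so that $\theta_r=\sum_{\ell=1}^k f^r_\ell w_\ell$, and define $F:\mathbb{T}^k\to\mathbb{C}$ by $F(\overline{z})=\sum_{r=0}^d\langle a|E_r|b\rangle\,e^{\mathrm{i} f^r(\overline{z})}$. Then \[\sup_{t\ge 0}\big|\exp(\mathrm{i}tA)_{a,b}\big| = \lim_{m\to\infty}\left(\frac{1}{(2\pi)^k}\int_{\mathbb{T}^k}|F(\overline{z})|^m\,\mathrm{d}\overline{z}\right)^{1/m}.\]
   Context: Here $\theta_0,\dots,\theta_d$ are the distinct eigenvalues of $A$ and $E_r$ is the orthogonal projection onto the $\theta_r$-eigenspace. Fix real numbers $w_1,\dots,w_k$ that are linearly independent over $\mathbb{Q}$ and such that every $\theta_r$ is an integer linear combination $\theta_r=\sum_{\ell=1}^k f^r_\ell w_\ell$ with $f^r_\ell\in\mathbb{Z}$ (such a basis can be computed from an exact factorization of the characteristic polynomial over its splitting field via the Smith normal form). For $\overline{z}=(z_1,\dots,z_k)$ write $f^r(\overline{z})=\sum_{\ell=1}^k f^r_\ell z_\ell$. $\mathbb{T}^k=\mathbb{R}^k/2\pi\mathbb{Z}^k$ is the $k$-torus with Lebesgue measure $\mathrm{d}\overline{z}$. *)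

theory Defs
  imports "HOL-Analysis.Analysis" "HOL-Probability.Probability"
begin

definition is_adjacency_matrix :: "real^'n^'n \<Rightarrow> bool" where
  "is_adjacency_matrix A \<longleftrightarrow>
     (\<forall>i j. A $ i $ j = 0 \<or> A $ i $ j = 1) \<and>
     (\<forall>i j. A $ i $ j = A $ j $ i) \<and> (\<forall>i. A $ i $ i = 0)"

definition is_spectral_decomposition ::
  "real^'n^'n \<Rightarrow> nat \<Rightarrow> (nat \<Rightarrow> real) \<Rightarrow> (nat \<Rightarrow> real^'n^'n) \<Rightarrow> bool" where
  "is_spectral_decomposition A d \<theta> E \<longleftrightarrow>
     inj_on \<theta> {0..d} \<and>
     (\<forall>r\<in>{0..d}. E r \<noteq> 0 \<and> transpose (E r) = E r \<and> E r ** E r = E r) \<and>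
     (\<forall>r\<in>{0..d}. \<forall>s\<in>{0..d}. r \<noteq> s \<longrightarrow> E r ** E s = 0) \<and>
     (\<Sum>r\<in>{0..d}. E r) = mat 1 \<and>
     A = (\<Sum>r\<in>{0..d}. \<theta> r *\<^sub>R E r)"

definition rat_lin_indep :: "nat \<Rightarrow> (nat \<Rightarrow> real) \<Rightarrow> bool" where
  "rat_lin_indep k w \<longleftrightarrow>
     (\<forall>c :: nat \<Rightarrow> rat. (\<Sum>l<k. of_rat (c l) * w l) = 0 \<longrightarrow> (\<forall>l<k. c l = 0))"

primrec cmat_pow :: "complex^'n^'n \<Rightarrow> nat \<Rightarrow> complex^'n^'n" where
  "cmat_pow M 0 = mat 1"
| "cmat_pow M (Suc n) = M ** cmat_pow M n"

definition cmat_exp :: "complex^'n^'n \<Rightarrow> complex^'n^'n" where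
  "cmat_exp M = (\<chi> i j. \<Sum>n. cmat_pow M n $ i $ j / of_nat (fact n))"

definition itA :: "real \<Rightarrow> real^'n^'n \<Rightarrow> complex^'n^'n" where
  "itA t A = (\<chi> i j. \<i> * complex_of_real t * complex_of_real (A $ i $ j))"

end

theory Submission
  imports Defs
begin

(* The amplitude exp(itA)_{ab} = sum_r <a|E_r|b> e^{i t theta_r} is the value of F on the
   line t w = (t w_1, ..., t w_k).  Because the w_l are linearly independent over Q, Kronecker's
   theorem makes this line dense modulo 2 pi, and F is Lipschitz, so the supremum S of the
   amplitude over t >= 0 bounds |F| on the whole torus (negative t reduce to positive ones by
   complex conjugation, the coefficients <a|E_r|b> being real).  Conversely |F| exceeds S - eps
   on a small box of positive measure, and for such a function the normalised L^m norms
   (vol^{-1} int |F|^m)^{1/m} converge to S. *)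

section \<open>Spectral form of the walk amplitude\<close>

lemma cmat_pow_itA_spectral:
  assumes "is_spectral_decomposition A d \<theta> E"
  shows "cmat_pow (itA t A) n $ i $ j =
           (\<Sum>r\<in>{0..d}. (\<i> * of_real (t * \<theta> r)) ^ n * of_real (E r $ i $ j))"
proof (induction n arbitrary: i j)
  case 0
  from assms have "(\<Sum>r\<in>{0..d}. E r) $ i $ j = mat 1 $ i $ j"
    by (simp add: is_spectral_decomposition_def)
  then have "(\<Sum>r\<in>{0..d}. E r $ i $ j) = (if i = j then 1 else 0)"
    by (simp add: mat_def sum_component)
  then show ?case by (simp add: mat_def flip: of_real_sum)
next
  case (Suc n)
  let ?x = "\<lambda>r. \<i> * of_real (t * \<theta> r)"
  have orth: "(\<Sum>k\<in>UNIV. E s $ i $ k * E r $ k $ j) = (if s = r then E r $ i $ j else 0)"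
    if "s \<in> {0..d}" "r \<in> {0..d}" for s r i j
  proof -
    have "(\<Sum>k\<in>UNIV. E s $ i $ k * E r $ k $ j) = (E s ** E r) $ i $ j"
      by (simp add: matrix_matrix_mult_def)
    then show ?thesis using assms that unfolding is_spectral_decomposition_def by auto
  qed
  have entry: "itA t A $ i $ k = (\<Sum>s\<in>{0..d}. ?x s * of_real (E s $ i $ k))" for i k
  proof -
    have "A $ i $ k = (\<Sum>s\<in>{0..d}. \<theta> s * E s $ i $ k)"
      using assms unfolding is_spectral_decomposition_def by (simp add: sum_component)
    then show ?thesis by (simp add: itA_def sum_distrib_left algebra_simps)
  qed
  have "cmat_pow (itA t A) (Suc n) $ i $ j =
          (\<Sum>k\<in>UNIV. itA t A $ i $ k * cmat_pow (itA t A) n $ k $ j)"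
    by (simp add: matrix_matrix_mult_def)
  also have "\<dots> = (\<Sum>k\<in>UNIV. \<Sum>s\<in>{0..d}. \<Sum>r\<in>{0..d}.
                       ?x s * ?x r ^ n * (of_real (E s $ i $ k) * of_real (E r $ k $ j)))"
    by (simp add: entry Suc.IH sum_product mult_ac)
  also have "\<dots> = (\<Sum>s\<in>{0..d}. \<Sum>r\<in>{0..d}.
                       ?x s * ?x r ^ n * of_real (\<Sum>k\<in>UNIV. E s $ i $ k * E r $ k $ j))"
    by (simp only: sum.swap[of _ UNIV] sum_distrib_left of_real_sum of_real_mult)
  also have "\<dots> = (\<Sum>s\<in>{0..d}. \<Sum>r\<in>{0..d}. if s = r then ?x r ^ Suc n * of_real (E r $ i $ j) else 0)"
    by (intro sum.cong refl) (simp add: orth)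
  also have "\<dots> = (\<Sum>r\<in>{0..d}. ?x r ^ Suc n * of_real (E r $ i $ j))"
    by (simp add: sum.delta)
  finally show ?case .
qed

lemma cmat_exp_itA_spectral:
  assumes "is_spectral_decomposition A d \<theta> E"
  shows "cmat_exp (itA t A) $ i $ j = (\<Sum>r\<in>{0..d}. of_real (E r $ i $ j) * iexp (t * \<theta> r))"
proof -
  have "(\<lambda>n. x ^ n / of_nat (fact n)) sums exp x" for x :: complex
    using exp_converges[of x] by (simp add: scaleR_conv_of_real divide_inverse mult.commute)
  then have "(\<lambda>n. \<Sum>r\<in>{0..d}. (\<i> * of_real (t * \<theta> r)) ^ n / of_nat (fact n) *
                       of_real (E r $ i $ j))
               sums (\<Sum>r\<in>{0..d}. iexp (t * \<theta> r) * of_real (E r $ i $ j))"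
    by (intro sums_sum sums_mult2)
  then have "(\<lambda>n. cmat_pow (itA t A) n $ i $ j / of_nat (fact n))
               sums (\<Sum>r\<in>{0..d}. iexp (t * \<theta> r) * of_real (E r $ i $ j))"
    by (simp add: cmat_pow_itA_spectral[OF assms] sum_divide_distrib)
  then show ?thesis
    by (simp add: cmat_exp_def sums_iff mult.commute)
qed

section \<open>Trigonometric polynomials on the torus\<close>

definition trig_poly ::
    "'r set \<Rightarrow> ('r \<Rightarrow> real) \<Rightarrow> ('r \<Rightarrow> nat \<Rightarrow> int) \<Rightarrow> nat \<Rightarrow> (nat \<Rightarrow> real) \<Rightarrow> complex"
  where "trig_poly R c f k z = (\<Sum>r\<in>R. complex_of_real (c r) * iexp (\<Sum>l<k. of_int (f r l) * z l))"

lemma norm_iexp_diff_le: "cmod (iexp x - iexp y) \<le> \<bar>x - y\<bar>"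
proof -
  have "iexp x - iexp y = iexp y * (iexp (x - y) - 1)"
    by (simp add: algebra_simps flip: exp_add)
  then have "cmod (iexp x - iexp y) = cmod (iexp (x - y) - 1)"
    by (simp add: norm_mult)
  also have "\<dots> \<le> \<bar>x - y\<bar>"
    using iexp_approx1[of "x - y" 0] by simp
  finally show ?thesis .
qed

lemma iexp_add_2pi_int: "iexp (x + 2 * pi * of_int n) = iexp x"
proof -
  have "iexp (x + 2 * pi * of_int n) = exp (\<i> * of_real x + \<i> * (of_int n * (of_real pi * 2)))"
    by (simp add: algebra_simps)
  then show ?thesis by (simp only: exp_plus_2pin)
qed

lemma trig_poly_periodic:
  assumes "\<And>l. l < k \<Longrightarrow> z l = z' l + 2 * pi * of_int (h l)"
  shows "trig_poly R c f k z = trig_poly R c f k z'"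
  unfolding trig_poly_def
proof (intro sum.cong refl arg_cong2[where f = "(*)"])
  fix r
  have "(\<Sum>l<k. of_int (f r l) * z l) =
          (\<Sum>l<k. of_int (f r l) * z' l) + 2 * pi * of_int (\<Sum>l<k. f r l * h l)"
    using assms by (simp add: sum.distrib sum_distrib_left algebra_simps)
  then show "iexp (\<Sum>l<k. of_int (f r l) * z l) = iexp (\<Sum>l<k. of_int (f r l) * z' l)"
    by (simp only: iexp_add_2pi_int)
qed

lemma trig_poly_reduce_mod_2pi:
  obtains z' where "\<And>l. 0 \<le> z' l \<and> z' l < 2 * pi" "trig_poly R c f k z' = trig_poly R c f k z"
proof
  define z' where "z' l = 2 * pi * frac (z l / (2 * pi))" for l
  show "0 \<le> z' l \<and> z' l < 2 * pi" for l
    using frac_ge_0 frac_lt_1 by (simp add: z'_def)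
  show "trig_poly R c f k z' = trig_poly R c f k z"
    by (rule trig_poly_periodic[where h = "\<lambda>l. - \<lfloor>z l / (2 * pi)\<rfloor>"])
      (simp add: z'_def frac_def field_simps)
qed

lemma trig_poly_uminus:
  "trig_poly R c f k (\<lambda>l. - z l) = cnj (trig_poly R c f k z)"
  by (simp add: trig_poly_def exp_cnj sum_negf)

lemma norm_trig_poly_le: "cmod (trig_poly R c f k z) \<le> (\<Sum>r\<in>R. \<bar>c r\<bar>)"
  unfolding trig_poly_def by (rule order_trans[OF norm_sum]) (simp add: norm_mult)

definition trig_poly_lipschitz_const :: "'r set \<Rightarrow> ('r \<Rightarrow> real) \<Rightarrow> ('r \<Rightarrow> nat \<Rightarrow> int) \<Rightarrow> nat \<Rightarrow> real"
  where "trig_poly_lipschitz_const R c f k = (\<Sum>r\<in>R. \<bar>c r\<bar> * (\<Sum>l<k. \<bar>of_int (f r l)\<bar>))"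

lemma trig_poly_lipschitz_const_nonneg: "0 \<le> trig_poly_lipschitz_const R c f k"
  unfolding trig_poly_lipschitz_const_def by (intro sum_nonneg) simp

lemma norm_trig_poly_diff_le:
  assumes "\<And>l. l < k \<Longrightarrow> \<bar>z l - z' l\<bar> \<le> \<delta>"
  shows "cmod (trig_poly R c f k z - trig_poly R c f k z') \<le> trig_poly_lipschitz_const R c f k * \<delta>"
proof -
  let ?x = "\<lambda>z r. \<Sum>l<k. of_int (f r l) * z l"
  have phase: "\<bar>?x z r - ?x z' r\<bar> \<le> (\<Sum>l<k. \<bar>of_int (f r l)\<bar>) * \<delta>" for r
  proof -
    have "\<bar>?x z r - ?x z' r\<bar> = \<bar>\<Sum>l<k. of_int (f r l) * (z l - z' l)\<bar>"
      by (simp add: sum_subtractf algebra_simps)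
    also have "\<dots> \<le> (\<Sum>l<k. \<bar>of_int (f r l)\<bar> * \<delta>)"
      using assms by (intro order_trans[OF sum_abs] sum_mono) (simp add: abs_mult mult_left_mono)
    finally show ?thesis by (simp add: sum_distrib_right)
  qed
  have "trig_poly R c f k z - trig_poly R c f k z' =
          (\<Sum>r\<in>R. of_real (c r) * (iexp (?x z r) - iexp (?x z' r)))"
    by (simp add: trig_poly_def sum_subtractf right_diff_distrib)
  then have "cmod (trig_poly R c f k z - trig_poly R c f k z') \<le>
               (\<Sum>r\<in>R. cmod (of_real (c r) * (iexp (?x z r) - iexp (?x z' r))))"
    by (simp only: norm_sum)
  also have "\<dots> = (\<Sum>r\<in>R. \<bar>c r\<bar> * cmod (iexp (?x z r) - iexp (?x z' r)))"
    by (simp add: norm_mult)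
  also have "\<dots> \<le> (\<Sum>r\<in>R. \<bar>c r\<bar> * ((\<Sum>l<k. \<bar>of_int (f r l)\<bar>) * \<delta>))"
    by (intro sum_mono mult_left_mono order_trans[OF norm_iexp_diff_le phase]) simp
  finally show ?thesis by (simp add: trig_poly_lipschitz_const_def sum_distrib_right mult.assoc)
qed

lemma bdd_above_norm_trig_poly_on_line:
  "bdd_above ((\<lambda>t. cmod (trig_poly R c f k (\<lambda>l. t * w l))) ` T)"
  by (intro bdd_aboveI2[where M = "\<Sum>r\<in>R. \<bar>c r\<bar>"] norm_trig_poly_le)

lemma norm_trig_poly_on_line_le_SUP_nonneg:
  "cmod (trig_poly R c f k (\<lambda>l. t * w l)) \<le> (SUP s\<in>{0..}. cmod (trig_poly R c f k (\<lambda>l. s * w l)))"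
proof (cases "0 \<le> t")
  case True
  then show ?thesis by (intro cSUP_upper bdd_above_norm_trig_poly_on_line) auto
next
  case False
  have "cmod (trig_poly R c f k (\<lambda>l. t * w l)) = cmod (trig_poly R c f k (\<lambda>l. - ((- t) * w l)))"
    by simp
  also have "\<dots> = cmod (trig_poly R c f k (\<lambda>l. (- t) * w l))"
    by (simp only: trig_poly_uminus complex_mod_cnj)
  also have "\<dots> \<le> (SUP s\<in>{0..}. cmod (trig_poly R c f k (\<lambda>l. s * w l)))"
    using False by (intro cSUP_upper bdd_above_norm_trig_poly_on_line) auto
  finally show ?thesis .
qed

lemma trig_poly_borel_measurable [measurable]:
  "trig_poly R c f k \<in> borel_measurable (PiM {..<k} (\<lambda>_. lborel))"
  unfolding trig_poly_def by measurable

section \<open>Density of a rationally independent line in the torus\<close>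

lemma rat_lin_indep_imp_inj_on:
  assumes "rat_lin_indep k w"
  shows "inj_on w {..<k}"
proof (rule inj_onI, rule ccontr)
  fix i j assume ij: "i \<in> {..<k}" "j \<in> {..<k}" "w i = w j" "i \<noteq> j"
  define c :: "nat \<Rightarrow> rat" where "c = (\<lambda>l. if l = i then 1 else if l = j then -1 else 0)"
  have "(\<Sum>l<k. of_rat (c l) * w l) = (\<Sum>l<k. (if l = i then w i else 0) - (if l = j then w j else 0))"
    by (intro sum.cong refl) (auto simp: c_def ij)
  also have "\<dots> = 0" using ij by (simp add: sum_subtractf)
  finally have "c i = 0" using assms ij unfolding rat_lin_indep_def by blast
  then show False by (simp add: c_def)
qed

lemma rat_lin_indep_imp_int_independent:
  assumes "rat_lin_indep k w"
  shows "module.independent (\<lambda>r. (*) (real_of_int r)) (w ` {..<k})"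
proof -
  interpret Modules.module "\<lambda>r. (*) (real_of_int r)"
    by (simp add: Modules.module.intro distrib_left mult.commute)
  show "independent (w ` {..<k})"
  proof
    assume "dependent (w ` {..<k})"
    then obtain T u v0 where T: "finite T" "T \<subseteq> w ` {..<k}" "(\<Sum>v\<in>T. real_of_int (u v) * v) = 0"
      and v0: "v0 \<in> T" "u v0 \<noteq> 0"
      unfolding dependent_explicit by blast
    define c :: "nat \<Rightarrow> rat" where "c l = (if w l \<in> T then of_int (u (w l)) else 0)" for l
    let ?S = "{l\<in>{..<k}. w l \<in> T}"
    have img: "w ` ?S = T" using T(2) by auto
    have inj: "inj_on w ?S"
      using rat_lin_indep_imp_inj_on[OF assms] by (rule inj_on_subset) auto
    have "(\<Sum>l<k. of_rat (c l) * w l) = (\<Sum>l<k. if w l \<in> T then real_of_int (u (w l)) * w l else 0)"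
      by (intro sum.cong refl) (simp add: c_def)
    also have "\<dots> = (\<Sum>l\<in>?S. real_of_int (u (w l)) * w l)"
      by (rule sum.inter_filter[symmetric]) simp
    also have "\<dots> = (\<Sum>v\<in>T. real_of_int (u v) * v)"
      using sum.reindex[OF inj, of "\<lambda>v. real_of_int (u v) * v"] img by simp
    finally have "\<forall>l<k. c l = 0" using T(3) assms unfolding rat_lin_indep_def by simp
    moreover obtain l0 where "l0 < k" "w l0 = v0" using T(2) v0(1) by auto
    ultimately show False using v0 by (auto simp: c_def)
  qed
qed

lemma trig_poly_approx_on_line:
  assumes "rat_lin_indep k w" "0 < \<epsilon>"
  obtains t where "cmod (trig_poly R c f k z - trig_poly R c f k (\<lambda>l. t * w l)) < \<epsilon>"
proof -
  define L where "L = trig_poly_lipschitz_const R c f k"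
  have "0 \<le> L" unfolding L_def by (rule trig_poly_lipschitz_const_nonneg)
  define \<epsilon>' where "\<epsilon>' = \<epsilon> / (2 * pi * (L + 1))"
  have "0 < \<epsilon>'" using \<open>0 \<le> L\<close> \<open>0 < \<epsilon>\<close> by (simp add: \<epsilon>'_def)
  obtain t h where th: "\<And>l. l < k \<Longrightarrow> \<bar>t * w l - of_int (h l) - z l / (2 * pi)\<bar> < \<epsilon>'"
    using Kronecker_thm_1[OF rat_lin_indep_imp_int_independent[OF assms(1)]
        rat_lin_indep_imp_inj_on[OF assms(1)] \<open>0 < \<epsilon>'\<close>, of "\<lambda>l. z l / (2 * pi)"] by blast
  define z' where "z' l = 2 * pi * t * w l - 2 * pi * of_int (h l)" for l
  have "\<bar>z l - z' l\<bar> \<le> 2 * pi * \<epsilon>'" if "l < k" for l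
  proof -
    have "\<bar>z l - z' l\<bar> = 2 * pi * \<bar>t * w l - of_int (h l) - z l / (2 * pi)\<bar>"
      by (simp add: z'_def abs_mult_pos' field_simps abs_minus_commute)
    then show ?thesis using th[OF that] by simp
  qed
  then have "cmod (trig_poly R c f k z - trig_poly R c f k z') \<le> L * (2 * pi * \<epsilon>')"
    unfolding L_def by (rule norm_trig_poly_diff_le)
  moreover have "trig_poly R c f k z' = trig_poly R c f k (\<lambda>l. (2 * pi * t) * w l)"
    by (rule trig_poly_periodic[where h = "\<lambda>l. - h l"]) (simp add: z'_def)
  ultimately have "cmod (trig_poly R c f k z - trig_poly R c f k (\<lambda>l. (2 * pi * t) * w l))
                     \<le> L * (2 * pi * \<epsilon>')"
    by simp
  also have "\<dots> < (L + 1) * (2 * pi * \<epsilon>')"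
    using \<open>0 < \<epsilon>'\<close> by (simp add: distrib_right)
  also have "\<dots> = \<epsilon>"
    using \<open>0 \<le> L\<close> by (simp add: \<epsilon>'_def)
  finally show ?thesis by (rule that)
qed

lemma norm_trig_poly_le_line_bound:
  assumes "rat_lin_indep k w" and line_bound: "\<And>t. cmod (trig_poly R c f k (\<lambda>l. t * w l)) \<le> S"
  shows "cmod (trig_poly R c f k z) \<le> S"
proof (rule field_le_epsilon)
  fix \<epsilon> :: real assume "0 < \<epsilon>"
  then obtain t where "cmod (trig_poly R c f k z - trig_poly R c f k (\<lambda>l. t * w l)) < \<epsilon>"
    using trig_poly_approx_on_line[OF assms(1)] by blast
  then show "cmod (trig_poly R c f k z) \<le> S + \<epsilon>"
    using norm_triangle_sub[of "trig_poly R c f k z" "trig_poly R c f k (\<lambda>l. t * w l)"] line_bound[of t]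
    by linarith
qed

lemma trig_poly_exceeds_on_box:
  assumes "s < cmod (trig_poly R c f k z)"
  obtains a \<delta> where "0 < \<delta>" "\<forall>l<k. 0 \<le> a l \<and> a l + \<delta> \<le> 2 * pi"
    "\<forall>y. (\<forall>l<k. a l \<le> y l \<and> y l < a l + \<delta>) \<longrightarrow> s \<le> cmod (trig_poly R c f k y)"
proof -
  obtain z0 where z0: "\<And>l. 0 \<le> z0 l \<and> z0 l < 2 * pi" "trig_poly R c f k z0 = trig_poly R c f k z"
    using trig_poly_reduce_mod_2pi[where R = R and c = c and f = f and k = k and z = z] by blast
  define L where "L = trig_poly_lipschitz_const R c f k"
  have "0 \<le> L" unfolding L_def by (rule trig_poly_lipschitz_const_nonneg)
  define \<eta> where "\<eta> = cmod (trig_poly R c f k z) - s"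
  define \<delta> where "\<delta> = min (2 * pi) (\<eta> / (L + 1))"
  define a where "a l = min (z0 l) (2 * pi - \<delta>)" for l
  have "0 < \<eta>" using assms by (simp add: \<eta>_def)
  then have "0 < \<delta>" using \<open>0 \<le> L\<close> by (simp add: \<delta>_def)
  have "\<delta> \<le> 2 * pi" by (simp add: \<delta>_def)
  have "L * \<delta> \<le> \<eta>"
  proof -
    have "L * \<delta> \<le> L * (\<eta> / (L + 1))" using \<open>0 \<le> L\<close> by (intro mult_left_mono) (auto simp: \<delta>_def)
    also have "\<dots> \<le> \<eta>" using \<open>0 \<le> L\<close> \<open>0 < \<eta>\<close> by (simp add: field_simps)
    finally show ?thesis .
  qed
  show ?thesis
  proof
    show "0 < \<delta>" by fact
    show "\<forall>l<k. 0 \<le> a l \<and> a l + \<delta> \<le> 2 * pi"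
      using z0(1) \<open>\<delta> \<le> 2 * pi\<close> by (auto simp: a_def min_def)
    show "\<forall>y. (\<forall>l<k. a l \<le> y l \<and> y l < a l + \<delta>) \<longrightarrow> s \<le> cmod (trig_poly R c f k y)"
    proof (intro allI impI)
      fix y assume y: "\<forall>l<k. a l \<le> y l \<and> y l < a l + \<delta>"
      have "\<bar>y l - z0 l\<bar> \<le> \<delta>" if "l < k" for l
        using y that z0(1)[of l] by (auto simp: a_def min_def abs_if split: if_splits)
      then have "cmod (trig_poly R c f k y - trig_poly R c f k z0) \<le> L * \<delta>"
        unfolding L_def by (rule norm_trig_poly_diff_le)
      moreover have "cmod (trig_poly R c f k z0) - cmod (trig_poly R c f k y) \<le>
                       cmod (trig_poly R c f k y - trig_poly R c f k z0)"
        using norm_triangle_ineq2[of "trig_poly R c f k z0" "trig_poly R c f k y"]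
        by (simp add: norm_minus_commute)
      ultimately show "s \<le> cmod (trig_poly R c f k y)"
        using z0(2) \<open>L * \<delta> \<le> \<eta>\<close> by (simp add: \<eta>_def)
    qed
  qed
qed

section \<open>Normalised \<open>L\<^sup>m\<close> norms tend to the supremum\<close>

lemma set_integral_power_le_measure:
  fixes g :: "'a \<Rightarrow> real"
  assumes X: "X \<in> sets M" "emeasure M X < \<infinity>" and g: "g \<in> borel_measurable M"
    and bounds: "\<And>x. x \<in> X \<Longrightarrow> 0 \<le> g x \<and> g x \<le> S"
  shows "set_integrable M X (\<lambda>x. g x ^ m)" "(LINT x:X|M. g x ^ m) \<le> measure M X * S ^ m"
proof -
  show int: "set_integrable M X (\<lambda>x. g x ^ m)"
    unfolding set_integrable_def
    using X g bounds by (intro integrableI_bounded_set_indicator[where B = "S ^ m"]) (auto intro!: power_mono)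
  have "(LINT x:X|M. g x ^ m) \<le> (LINT x:X|M. S ^ m)"
    using X bounds by (intro set_integral_mono int) (auto simp: set_integrable_def intro!: power_mono)
  also have "\<dots> = measure M X * S ^ m"
    using X by (simp add: set_integral_const)
  finally show "(LINT x:X|M. g x ^ m) \<le> measure M X * S ^ m" .
qed

lemma measure_mult_power_le_set_integral:
  fixes g :: "'a \<Rightarrow> real"
  assumes int: "set_integrable M X (\<lambda>x. g x ^ m)"
    and Y: "Y \<in> sets M" "Y \<subseteq> X" "emeasure M Y < \<infinity>"
    and g: "\<And>x. x \<in> X \<Longrightarrow> 0 \<le> g x" "\<And>x. x \<in> Y \<Longrightarrow> s \<le> g x" and "0 \<le> s"
  shows "measure M Y * s ^ m \<le> (LINT x:X|M. g x ^ m)"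
proof -
  have "measure M Y * s ^ m = (\<integral>x. indicator Y x * s ^ m \<partial>M)"
    using Y by simp
  also have "\<dots> \<le> (\<integral>x. indicator X x *\<^sub>R g x ^ m \<partial>M)"
  proof (rule integral_mono)
    show "integrable M (\<lambda>x. indicator Y x * s ^ m)" using Y by simp
    show "integrable M (\<lambda>x. indicator X x *\<^sub>R g x ^ m)" using int by (simp add: set_integrable_def)
    show "indicator Y x * s ^ m \<le> indicator X x *\<^sub>R g x ^ m" for x
      using Y(2) g \<open>0 \<le> s\<close> by (auto simp: indicator_def intro!: power_mono)
  qed
  finally show ?thesis by (simp add: set_lebesgue_integral_def)
qed

lemma root_normalized_set_integral_power_le:
  fixes g :: "'a \<Rightarrow> real"
  assumes X: "X \<in> sets M" "emeasure M X < \<infinity>" "0 < measure M X" and g: "g \<in> borel_measurable M"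
    and bounds: "\<And>x. x \<in> X \<Longrightarrow> 0 \<le> g x \<and> g x \<le> S" and "0 \<le> S" "0 < m"
  shows "root m (1 / measure M X * (LINT x:X|M. g x ^ m)) \<le> S"
proof -
  have "1 / measure M X * (LINT x:X|M. g x ^ m) \<le> S ^ m"
    using set_integral_power_le_measure(2)[OF X(1,2) g bounds, of m] X(3) by (simp add: field_simps)
  then show ?thesis
    using assms by (metis real_root_le_mono real_root_power_cancel)
qed

lemma root_normalized_set_integral_power_ge:
  fixes g :: "'a \<Rightarrow> real"
  assumes int: "set_integrable M X (\<lambda>x. g x ^ m)" and "0 < measure M X"
    and Y: "Y \<in> sets M" "Y \<subseteq> X" "emeasure M Y < \<infinity>"
    and g: "\<And>x. x \<in> X \<Longrightarrow> 0 \<le> g x" "\<And>x. x \<in> Y \<Longrightarrow> s \<le> g x" and "0 \<le> s" "0 < m"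
  shows "root m (measure M Y / measure M X) * s \<le> root m (1 / measure M X * (LINT x:X|M. g x ^ m))"
proof -
  define q where "q = measure M Y / measure M X"
  have "root m q * s = root m (q * s ^ m)"
    using \<open>0 \<le> s\<close> \<open>0 < m\<close> by (simp add: real_root_mult real_root_power_cancel)
  also have "\<dots> \<le> root m (1 / measure M X * (LINT x:X|M. g x ^ m))"
  proof (rule real_root_le_mono[OF \<open>0 < m\<close>])
    show "q * s ^ m \<le> 1 / measure M X * (LINT x:X|M. g x ^ m)"
      using measure_mult_power_le_set_integral[OF assms(1,3-8)] \<open>0 < measure M X\<close>
      by (simp add: q_def field_simps)
  qed
  finally show ?thesis unfolding q_def .
qed

lemma tendsto_root_normalized_set_integral_power:
  fixes g :: "'a \<Rightarrow> real"
  assumes X: "X \<in> sets M" "emeasure M X < \<infinity>" and g: "g \<in> borel_measurable M"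
    and bounds: "\<And>x. x \<in> X \<Longrightarrow> 0 \<le> g x \<and> g x \<le> S"
    and near_sup: "\<And>s. s < S \<Longrightarrow> \<exists>Y\<in>sets M. Y \<subseteq> X \<and> 0 < measure M Y \<and> (\<forall>x\<in>Y. s \<le> g x)"
  shows "(\<lambda>m. root m (1 / measure M X * (LINT x:X|M. g x ^ m))) \<longlonglongrightarrow> S"
proof -
  have pos: "0 < measure M X" "0 \<le> S"
  proof -
    obtain Y where Y: "Y \<in> sets M" "Y \<subseteq> X" "0 < measure M Y"
      using near_sup[of "S - 1"] by auto
    then obtain x where "x \<in> X" by (metis measure_empty less_irrefl subset_empty ex_in_conv)
    then show "0 \<le> S" using bounds by force
    show "0 < measure M X"
      using Y X by (intro order_less_le_trans[OF Y(3)] measure_mono_fmeasurable)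
        (auto simp: fmeasurable_def)
  qed
  show ?thesis
  proof (rule order_tendstoI)
    fix y assume "S < y"
    show "\<forall>\<^sub>F m in sequentially. root m (1 / measure M X * (LINT x:X|M. g x ^ m)) < y"
      using eventually_gt_at_top[of 0]
    proof eventually_elim
      case (elim m)
      show ?case
        using root_normalized_set_integral_power_le[OF X pos(1) g bounds pos(2) elim] \<open>S < y\<close> by linarith
    qed
  next
    fix y assume "y < S"
    show "\<forall>\<^sub>F m in sequentially. y < root m (1 / measure M X * (LINT x:X|M. g x ^ m))"
    proof (cases "y < 0")
      case True
      have "0 \<le> (LINT x:X|M. g x ^ m)" for m
        unfolding set_lebesgue_integral_def using bounds
        by (intro Bochner_Integration.integral_nonneg) (simp add: indicator_def)
      then have "0 \<le> root m (1 / measure M X * (LINT x:X|M. g x ^ m))" for m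
        using pos(1) by (simp add: real_root_ge_zero)
      then show ?thesis using True by (intro always_eventually allI) (rule less_le_trans)
    next
      case False
      define s where "s = (y + S) / 2"
      have s: "0 \<le> s" "y < s" "s < S" using False \<open>y < S\<close> by (auto simp: s_def)
      obtain Y where Y: "Y \<in> sets M" "Y \<subseteq> X" "0 < measure M Y" "\<forall>x\<in>Y. s \<le> g x"
        using near_sup[OF s(3)] by auto
      have Y_fin: "emeasure M Y < \<infinity>"
        using Y X by (metis emeasure_mono order_le_less_trans)
      have root_ge: "root m (measure M Y / measure M X) * s \<le>
                       root m (1 / measure M X * (LINT x:X|M. g x ^ m))" if "0 < m" for m
        using Y(4) bounds s(1) that
        by (intro root_normalized_set_integral_power_ge[OF set_integral_power_le_measure(1)[OF X g bounds]
            pos(1) Y(1,2) Y_fin]) auto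
      have "(\<lambda>m. root m (measure M Y / measure M X) * s) \<longlonglongrightarrow> 1 * s"
        using Y(3) pos(1) by (intro tendsto_mult LIMSEQ_root_const tendsto_const) simp
      then have "\<forall>\<^sub>F m in sequentially. y < root m (measure M Y / measure M X) * s"
        using s(2) by (intro order_tendstoD(1)) simp_all
      then show ?thesis
        using eventually_gt_at_top[of 0]
      proof eventually_elim
        case (elim m)
        show ?case
          using root_ge[OF elim(2)] elim(1) by linarith
      qed
    qed
  qed
qed

lemma emeasure_PiM_lborel_box:
  assumes "finite I" "\<And>i. i \<in> I \<Longrightarrow> c i \<le> d i"
  shows "emeasure (PiM I (\<lambda>_. lborel)) (PiE I (\<lambda>i. {c i..<d i})) = ennreal (\<Prod>i\<in>I. d i - c i)"
proof -
  interpret product_sigma_finite "\<lambda>_. lborel" by standard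
  have "emeasure (PiM I (\<lambda>_. lborel)) (PiE I (\<lambda>i. {c i..<d i})) = (\<Prod>i\<in>I. emeasure lborel {c i..<d i})"
    using assms(1) by (rule emeasure_PiM) auto
  also have "\<dots> = ennreal (\<Prod>i\<in>I. d i - c i)"
    using assms by (simp add: prod_ennreal)
  finally show ?thesis .
qed

lemma measure_PiM_lborel_box:
  assumes "finite I" "\<And>i. i \<in> I \<Longrightarrow> c i \<le> d i"
  shows "measure (PiM I (\<lambda>_. lborel)) (PiE I (\<lambda>i. {c i..<d i})) = (\<Prod>i\<in>I. d i - c i)"
  using emeasure_PiM_lborel_box[OF assms] assms(2)
  by (intro measure_eq_emeasure_eq_ennreal) (auto intro: prod_nonneg)

lemma tendsto_root_normalized_cube_integral_power:
  fixes g :: "(nat \<Rightarrow> real) \<Rightarrow> real"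
  assumes "0 < T" and g: "g \<in> borel_measurable (PiM {..<k} (\<lambda>_. lborel))"
    and bounds: "\<And>z. z \<in> (\<Pi>\<^sub>E l\<in>{..<k}. {0..<T}) \<Longrightarrow> 0 \<le> g z \<and> g z \<le> S"
    and near_sup: "\<And>s. s < S \<Longrightarrow> \<exists>c \<delta>. 0 < \<delta> \<and> (\<forall>l<k. 0 \<le> c l \<and> c l + \<delta> \<le> T) \<and>
                        (\<forall>z. (\<forall>l<k. c l \<le> z l \<and> z l < c l + \<delta>) \<longrightarrow> s \<le> g z)"
  shows "(\<lambda>m. root m (1 / T ^ k *
            (LINT z : (\<Pi>\<^sub>E l\<in>{..<k}. {0..<T}) | PiM {..<k} (\<lambda>_. lborel). g z ^ m))) \<longlonglongrightarrow> S"
proof -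
  let ?M = "PiM {..<k} (\<lambda>_. lborel :: real measure)"
  let ?X = "\<Pi>\<^sub>E l\<in>{..<k}. {0..<T}"
  have box_sets: "(\<Pi>\<^sub>E l\<in>{..<k}. {c l..<d l}) \<in> sets ?M" for c d :: "nat \<Rightarrow> real"
    by (rule sets_PiM_I_finite) auto
  have "measure ?M ?X = T ^ k"
    using measure_PiM_lborel_box[of "{..<k}" "\<lambda>_. 0" "\<lambda>_. T"] \<open>0 < T\<close> by simp
  moreover have "(\<lambda>m. root m (1 / measure ?M ?X * (LINT z:?X|?M. g z ^ m))) \<longlonglongrightarrow> S"
  proof (rule tendsto_root_normalized_set_integral_power[OF box_sets _ g bounds])
    show "emeasure ?M ?X < \<infinity>"
      using emeasure_PiM_lborel_box[of "{..<k}" "\<lambda>_. 0" "\<lambda>_. T"] \<open>0 < T\<close> by simp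
    fix s assume "s < S"
    then obtain c \<delta> where \<delta>: "0 < \<delta>" and c: "\<forall>l<k. 0 \<le> c l \<and> c l + \<delta> \<le> T"
      and large: "\<forall>z. (\<forall>l<k. c l \<le> z l \<and> z l < c l + \<delta>) \<longrightarrow> s \<le> g z"
      using near_sup by blast
    let ?Y = "\<Pi>\<^sub>E l\<in>{..<k}. {c l..<c l + \<delta>}"
    have "?Y \<subseteq> ?X"
    proof (rule PiE_mono)
      show "{c l..<c l + \<delta>} \<subseteq> {0..<T}" if "l \<in> {..<k}" for l
        using c that by auto
    qed
    moreover have "0 < measure ?M ?Y"
      using measure_PiM_lborel_box[of "{..<k}" c "\<lambda>l. c l + \<delta>"] \<delta> by simp
    moreover have "\<forall>z\<in>?Y. s \<le> g z" using large by (simp add: PiE_iff)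
    ultimately show "\<exists>Y\<in>sets ?M. Y \<subseteq> ?X \<and> 0 < measure ?M Y \<and> (\<forall>z\<in>Y. s \<le> g z)"
      by (intro bexI[OF _ box_sets] conjI)
  qed
  ultimately show ?thesis by simp
qed

theorem proposition5p1:
  fixes A :: "real^'n^'n" and a b :: 'n
    and d :: nat and \<theta> :: "nat \<Rightarrow> real" and E :: "nat \<Rightarrow> real^'n^'n"
    and k :: nat and w :: "nat \<Rightarrow> real" and f :: "nat \<Rightarrow> nat \<Rightarrow> int"
    and F :: "(nat \<Rightarrow> real) \<Rightarrow> complex"
  assumes "is_adjacency_matrix A"
    and "is_spectral_decomposition A d \<theta> E"
    and "rat_lin_indep k w"
    and "\<forall>r\<in>{0..d}. \<theta> r = (\<Sum>l<k. of_int (f r l) * w l)"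
    and "\<And>z. F z = (\<Sum>r\<in>{0..d}. complex_of_real (E r $ a $ b) *
                         exp (\<i> * complex_of_real (\<Sum>l<k. of_int (f r l) * z l)))"
  shows "(\<lambda>m. root m ((1 / (2 * pi) ^ k) *
            (LINT z : (\<Pi>\<^sub>E l\<in>{..<k}. {0..<2 * pi}) | PiM {..<k} (\<lambda>_. lborel). cmod (F z) ^ m)))
         \<longlonglongrightarrow> (SUP t\<in>{0..}. cmod (cmat_exp (itA t A) $ a $ b))"
proof -
  define P where "P = trig_poly {0..d} (\<lambda>r. E r $ a $ b) f k"
  have F_eq: "F = P"
    using assms(5) by (auto simp: P_def trig_poly_def)
  have on_line: "cmat_exp (itA t A) $ a $ b = P (\<lambda>l. t * w l)" for t
    using assms(4)
    by (simp add: cmat_exp_itA_spectral[OF assms(2)] P_def trig_poly_def sum_distrib_left mult_ac)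
  define S where "S = (SUP t\<in>{0..}. cmod (P (\<lambda>l. t * w l)))"
  have "(\<lambda>m. root m (1 / (2 * pi) ^ k *
          (LINT z : (\<Pi>\<^sub>E l\<in>{..<k}. {0..<2 * pi}) | PiM {..<k} (\<lambda>_. lborel). cmod (P z) ^ m))) \<longlonglongrightarrow> S"
  proof (rule tendsto_root_normalized_cube_integral_power)
    show "(\<lambda>z. cmod (P z)) \<in> borel_measurable (PiM {..<k} (\<lambda>_. lborel))"
      unfolding P_def by measurable
    show "0 \<le> cmod (P z) \<and> cmod (P z) \<le> S" for z
      unfolding P_def S_def
      by (simp add: norm_trig_poly_le_line_bound[OF assms(3) norm_trig_poly_on_line_le_SUP_nonneg])
    fix s assume "s < S"
    then obtain t where "s < cmod (P (\<lambda>l. t * w l))"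
      unfolding S_def P_def by (auto simp: less_cSUP_iff[OF _ bdd_above_norm_trig_poly_on_line])
    then show "\<exists>c \<delta>. 0 < \<delta> \<and> (\<forall>l<k. 0 \<le> c l \<and> c l + \<delta> \<le> 2 * pi) \<and>
                 (\<forall>z. (\<forall>l<k. c l \<le> z l \<and> z l < c l + \<delta>) \<longrightarrow> s \<le> cmod (P z))"
      unfolding P_def by (elim trig_poly_exceeds_on_box) blast
  qed simp
  then show ?thesis by (simp add: F_eq S_def on_line)
qed

end
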